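(* Let $n\ge1$, let $(H_k)_{k=0}^{n-1}$ and $(G_j)_{j=0}^{n-1}$ be two indexed families of $n\times n$ Hadamard matrices, and let $\mathcal P$ and $\mathcal Q$ be left orthogonal Latin squares of order $n$. Then the bases $B(\mathcal P,(H_k))$ and $B(\mathcal Q,(G_j))$ of $\mathbb C^n\otimes\mathbb C^n$ are mutually unbiased: $|\langle a|b\rangle|^2=\frac1{n^2}$ for every state $\ket a$ of the first and every state $\ket b$ of the second.
   Context: $\{\ket k\}_{k=0}^{n-1}$ is the computational basis of $\mathbb C^n$. A quantum Latin square (QLS) of order $n$ is an $n\times n$ array of vectors of $\mathbb C^n$ in which every row and column is an orthonormal basis; the entry in column $i$, row $j$ of $\mathcal Q$ is $\ket{Q_{ij}}$. A Latin square is a QLS all of whose entries are computational basis states; identify it with labels $L_{ij}\in\{0,\dots,n-1\}$. Two Latin squares $A,B$ are orthogonal if the pairs $(A_{ij},B_{ij})$ over all positions give all $n^2$ pairs of labels. The left conjugate $L'$ of a Latin square $L$ is defined by $L'_{ik}=j$ iff $L_{ij}=k$; two Latin squares are left orthogonal if their left conjugates are orthogonal. A Hadamard matrix of order $n$ is an $n\times n$ complex matrix $H$ with $|H_{ij}|=1$ and $HH^\dagger=H^\dagger H=nI_n$. Given a QLS $\mathcal Q$ and Hadamards $(H_j)_{j=0}^{n-1}$, $B(\mathcal Q,(H_j))$ is the orthonormal basis of $\mathbb C^n\otimes\mathbb C^n$ consisting of $A_{ij}=\frac1{\sqrt n}\sum_{k}\ket k\otimes\ket{Q_{kj}}\bra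 kH_j\ket i$, $i,j\in\{0,\dots,n-1\}$. *)

theory Defs
  imports Complex_Main
begin

text \<open>A vector of C^n is a function nat => complex (only entries < n matter);
  a vector of C^n (x) C^n is a function nat * nat => complex, with
  coordinate (a,b) the coefficient of ket a (x) ket b.
  A square array is indexed as Q i j = entry in column i, row j.\<close>

definition ket :: "nat \<Rightarrow> nat \<Rightarrow> complex" where
  "ket k = (\<lambda>x. if x = k then 1 else 0)"

definition tensor :: "(nat \<Rightarrow> complex) \<Rightarrow> (nat \<Rightarrow> complex) \<Rightarrow> (nat \<times> nat \<Rightarrow> complex)" where
  "tensor u v = (\<lambda>(a, b). u a * v b)"

definition inner2 :: "nat \<Rightarrow> (nat \<times> nat \<Rightarrow> complex) \<Rightarrow> (nat \<times> nat \<Rightarrow> complex) \<Rightarrow> complex" where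
  "inner2 n u v = (\<Sum>p\<in>{..<n} \<times> {..<n}. cnj (u p) * v p)"

definition latin_square :: "nat \<Rightarrow> (nat \<Rightarrow> nat \<Rightarrow> nat) \<Rightarrow> bool" where
  "latin_square n L \<longleftrightarrow>
     (\<forall>j<n. bij_betw (\<lambda>i. L i j) {..<n} {..<n}) \<and>
     (\<forall>i<n. bij_betw (\<lambda>j. L i j) {..<n} {..<n})"

definition left_conjugate :: "nat \<Rightarrow> (nat \<Rightarrow> nat \<Rightarrow> nat) \<Rightarrow> nat \<Rightarrow> nat \<Rightarrow> nat" where
  "left_conjugate n L i k = (THE j. j < n \<and> L i j = k)"

definition orthogonal_latin :: "nat \<Rightarrow> (nat \<Rightarrow> nat \<Rightarrow> nat) \<Rightarrow> (nat \<Rightarrow> nat \<Rightarrow> nat) \<Rightarrow> bool" where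
  "orthogonal_latin n A B \<longleftrightarrow>
     bij_betw (\<lambda>(i, j). (A i j, B i j)) ({..<n} \<times> {..<n}) ({..<n} \<times> {..<n})"

definition left_orthogonal :: "nat \<Rightarrow> (nat \<Rightarrow> nat \<Rightarrow> nat) \<Rightarrow> (nat \<Rightarrow> nat \<Rightarrow> nat) \<Rightarrow> bool" where
  "left_orthogonal n A B \<longleftrightarrow> orthogonal_latin n (left_conjugate n A) (left_conjugate n B)"

definition hadamard :: "nat \<Rightarrow> (nat \<Rightarrow> nat \<Rightarrow> complex) \<Rightarrow> bool" where
  "hadamard n H \<longleftrightarrow>
     (\<forall>i<n. \<forall>j<n. cmod (H i j) = 1) \<and>
     (\<forall>i<n. \<forall>j<n. (\<Sum>k<n. H i k * cnj (H j k)) = (if i = j then of_nat n else 0)) \<and>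
     (\<forall>i<n. \<forall>j<n. (\<Sum>k<n. cnj (H k i) * H k j) = (if i = j then of_nat n else 0))"

definition latin_qls :: "(nat \<Rightarrow> nat \<Rightarrow> nat) \<Rightarrow> nat \<Rightarrow> nat \<Rightarrow> (nat \<Rightarrow> complex)" where
  "latin_qls L = (\<lambda>i j. ket (L i j))"

definition qls_basis :: "nat \<Rightarrow> (nat \<Rightarrow> nat \<Rightarrow> (nat \<Rightarrow> complex)) \<Rightarrow> (nat \<Rightarrow> nat \<Rightarrow> nat \<Rightarrow> complex)
    \<Rightarrow> nat \<Rightarrow> nat \<Rightarrow> (nat \<times> nat \<Rightarrow> complex)" where
  "qls_basis n Q H i j = (\<lambda>p. complex_of_real (1 / sqrt (real n)) *
       (\<Sum>k<n. tensor (ket k) (Q k j) p * H j k i))"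

end

theory Submission
  imports Defs
begin

text \<open>The basis vector A_ij built from a Latin square P is supported on the n positions
  (a, P a j), where its coordinate is (H_j)_ai / sqrt n. Hence the inner product of A_ij with
  a vector A'_i'j' built from Q only picks up the rows a with P a j = Q a j'. Left
  orthogonality of P and Q says that there is exactly one such row, so the inner product is a
  single product of two Hadamard entries divided by n, which has modulus 1/n.\<close>

lemma latin_square_in_range:
  "latin_square n P \<Longrightarrow> a < n \<Longrightarrow> j < n \<Longrightarrow> P a j < n"
  unfolding latin_square_def bij_betw_def by auto

lemma left_conjugate_apply:
  assumes "latin_square n P" "a < n" "j < n"
  shows "left_conjugate n P a (P a j) = j"
proof -
  have "inj_on (P a) {..<n}"
    using assms unfolding latin_square_def bij_betw_def by auto
  with assms show ?thesis
    unfolding left_conjugate_def by (auto simp: inj_on_def intro: the_equality)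
qed

lemma left_conjugate_inverse:
  assumes "latin_square n P" "a < n" "k < n"
  shows "left_conjugate n P a k < n" and "P a (left_conjugate n P a k) = k"
proof -
  have "k \<in> P a ` {..<n}"
    using assms unfolding latin_square_def bij_betw_def by auto
  then obtain j where "j < n" "P a j = k" by auto
  then show "left_conjugate n P a k < n" "P a (left_conjugate n P a k) = k"
    using left_conjugate_apply[OF assms(1,2)] by auto
qed

text \<open>Every common row a gives the preimage (a, P a j) of (j, j') under the bijection
  (i, k) \<mapsto> (P' i k, Q' i k) of the left conjugates, so there is exactly one.\<close>
lemma left_orthogonal_unique_common_row:
  assumes P: "latin_square n P" and Q: "latin_square n Q" and PQ: "left_orthogonal n P Q"
    and "j < n" "j' < n"
  shows "\<exists>a0<n. \<forall>a<n. P a j = Q a j' \<longleftrightarrow> a = a0"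
proof -
  let ?f = "\<lambda>(i, k). (left_conjugate n P i k, left_conjugate n Q i k)"
  have bij: "bij_betw ?f ({..<n} \<times> {..<n}) ({..<n} \<times> {..<n})"
    using PQ unfolding left_orthogonal_def orthogonal_latin_def by simp
  have f_common: "?f (a, P a j) = (j, j')" if "a < n" "P a j = Q a j'" for a
    using that left_conjugate_apply[OF P that(1) \<open>j < n\<close>]
      left_conjugate_apply[OF Q that(1) \<open>j' < n\<close>] by simp
  obtain a0 k where a0: "a0 < n" "k < n"
    and jj': "left_conjugate n P a0 k = j" "left_conjugate n Q a0 k = j'"
  proof -
    have "(j, j') \<in> ?f ` ({..<n} \<times> {..<n})"
      using bij \<open>j < n\<close> \<open>j' < n\<close> unfolding bij_betw_def by simp
    then show ?thesis
      using that by auto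
  qed
  have common: "P a0 j = Q a0 j'"
    using jj' left_conjugate_inverse[OF P a0] left_conjugate_inverse[OF Q a0] by simp
  have "a = a0" if "a < n" "P a j = Q a j'" for a
  proof -
    have "(a, P a j) = (a0, P a0 j)"
    proof (rule inj_onD[OF bij_betw_imp_inj_on[OF bij]])
      show "?f (a, P a j) = ?f (a0, P a0 j)"
        using f_common[OF that] f_common[OF a0(1) common] by simp
      show "(a, P a j) \<in> {..<n} \<times> {..<n}" "(a0, P a0 j) \<in> {..<n} \<times> {..<n}"
        using latin_square_in_range[OF P] that(1) a0(1) \<open>j < n\<close> by auto
    qed
    then show ?thesis by simp
  qed
  then show ?thesis
    using a0(1) common by blast
qed

lemma qls_basis_latin_qls_apply:
  assumes "a < n"
  shows "qls_basis n (latin_qls P) H i j (a, b) =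
           complex_of_real (1 / sqrt (real n)) * (if b = P a j then H j a i else 0)"
proof -
  have "(\<Sum>k<n. tensor (ket k) (latin_qls P k j) (a, b) * H j k i)
      = (\<Sum>k<n. if k = a then (if b = P a j then H j a i else 0) else 0)"
    by (rule sum.cong) (auto simp: tensor_def ket_def latin_qls_def)
  then show ?thesis
    using assms by (simp add: qls_basis_def)
qed

lemma inner2_qls_basis_latin_qls:
  assumes "\<forall>a<n. P a j < n"
  shows "inner2 n (qls_basis n (latin_qls P) H i j) (qls_basis n (latin_qls Q) G i' j')
       = complex_of_real (1 / real n) *
           (\<Sum>a<n. if P a j = Q a j' then cnj (H j a i) * G j' a i' else 0)"
proof -
  define c where "c = complex_of_real (1 / sqrt (real n))"
  have cc: "cnj c * c = complex_of_real (1 / real n)"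
    unfolding c_def by (simp flip: of_real_mult add: real_sqrt_mult[symmetric])
  have row: "(\<Sum>b<n. cnj (qls_basis n (latin_qls P) H i j (a, b)) *
                      qls_basis n (latin_qls Q) G i' j' (a, b))
           = cnj c * c * (if P a j = Q a j' then cnj (H j a i) * G j' a i' else 0)"
    if "a < n" for a
  proof -
    have "(\<Sum>b<n. cnj (qls_basis n (latin_qls P) H i j (a, b)) *
                  qls_basis n (latin_qls Q) G i' j' (a, b))
        = (\<Sum>b<n. if b = P a j then cnj c * c *
             (if P a j = Q a j' then cnj (H j a i) * G j' a i' else 0) else 0)"
      by (rule sum.cong) (auto simp: qls_basis_latin_qls_apply[OF that] c_def)
    then show ?thesis
      using assms that by simp
  qed
  have "inner2 n (qls_basis n (latin_qls P) H i j) (qls_basis n (latin_qls Q) G i' j')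
      = (\<Sum>a<n. \<Sum>b<n. cnj (qls_basis n (latin_qls P) H i j (a, b)) *
                            qls_basis n (latin_qls Q) G i' j' (a, b))"
    unfolding inner2_def by (simp add: sum.cartesian_product)
  also have "\<dots> = (\<Sum>a<n. cnj c * c * (if P a j = Q a j' then cnj (H j a i) * G j' a i' else 0))"
    by (rule sum.cong) (simp_all add: row)
  finally show ?thesis
    by (simp add: cc sum_distrib_left)
qed

theorem corollary27:
  fixes n :: nat
    and H G :: "nat \<Rightarrow> nat \<Rightarrow> nat \<Rightarrow> complex"
    and P Q :: "nat \<Rightarrow> nat \<Rightarrow> nat"
  assumes "n \<ge> 1"
    and "\<forall>k<n. hadamard n (H k)"
    and "\<forall>j<n. hadamard n (G j)"
    and "latin_square n P" and "latin_square n Q"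
    and "left_orthogonal n P Q"
  shows "\<forall>i<n. \<forall>j<n. \<forall>i'<n. \<forall>j'<n.
           (cmod (inner2 n (qls_basis n (latin_qls P) H i j) (qls_basis n (latin_qls Q) G i' j')))\<^sup>2
             = 1 / (real n)\<^sup>2"
proof (intro allI impI)
  fix i j i' j' assume "i < n" "j < n" "i' < n" "j' < n"
  obtain a0 where a0: "a0 < n" "\<forall>a<n. P a j = Q a j' \<longleftrightarrow> a = a0"
    using left_orthogonal_unique_common_row[OF assms(4-6) \<open>j < n\<close> \<open>j' < n\<close>] by blast
  have "inner2 n (qls_basis n (latin_qls P) H i j) (qls_basis n (latin_qls Q) G i' j')
      = complex_of_real (1 / real n) * (cnj (H j a0 i) * G j' a0 i')"
  proof -
    have "(\<Sum>a<n. if P a j = Q a j' then cnj (H j a i) * G j' a i' else 0)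
        = (\<Sum>a<n. if a = a0 then cnj (H j a i) * G j' a i' else 0)"
      using a0(2) by (intro sum.cong) auto
    then show ?thesis
      using inner2_qls_basis_latin_qls[of n P j H i Q G i' j']
        latin_square_in_range[OF assms(4) _ \<open>j < n\<close>] a0(1)
      by simp
  qed
  moreover have "cmod (H j a0 i) = 1" "cmod (G j' a0 i') = 1"
    using assms(2,3) \<open>i < n\<close> \<open>j < n\<close> \<open>i' < n\<close> \<open>j' < n\<close> a0(1) unfolding hadamard_def by auto
  ultimately show "(cmod (inner2 n (qls_basis n (latin_qls P) H i j)
                     (qls_basis n (latin_qls Q) G i' j')))\<^sup>2 = 1 / (real n)\<^sup>2"
    by (simp add: norm_mult norm_divide power_divide)
qed

end
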